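(* Assume the noise-free case $M=I_n$, $N=0$ (so $Q=I_n$, $R(\mathcal D)=X_+-BU_-$ and $\Sigma(\mathcal D)=\{A\in\mathbb{R}^{n\times n}: X_+-BU_-=AX_-\}$), and assume $\Sigma(\mathcal D)\neq\varnothing$. Let $\mathcal F$ be the set of all $v\in\mathbb{R}^T$ such that $v\in\big(\mathcal J^*(\mathcal D)^\perp\cap\ker(CX_-)\big)\setminus\{0\}$ and $X_+v\notin X_+\mathcal J^*(\mathcal D)$. For $\lambda\in\mathbb{C}$ and $v\in\mathcal F$, define the perturbation $\Delta\mathcal D(\lambda,v):=(\Delta_{X_-},\Delta_{X_+},\Delta_{U_-},\Delta_{Y_-})$ with $\Delta_{X_-}=0$, $\Delta_{U_-}=0$, $\Delta_{Y_-}=0$ and $$\Delta_{X_+}:=(\lambda X_--X_++BU_-)v\,\zeta^\mathsf{T},\qquad \zeta:=\frac{\operatorname{proj}_{\mathcal S_+}(v)}{\|\operatorname{proj}_{\mathcal S_+}(v)\|_2^2},$$ so that $\|\Delta\mathcal D(\lambda,v)\|_{\mathrm F}^2=\|\Delta_{X_+}\|_{\mathrm F}^2=\|(\lambda X_--X_++BU_-)v\|_2^2/\|\operatorname{proj}_{\mathcal S_+}(v)\|_2^2$. Then $$\inf_{\lambda\in\mathbb{C},\,v\in\mathcal F}\|\Delta\mathcal D(\lambda,v)\|_{\mathrm F}\ \ge\ d_{\mathrm{UNOBS}}(\Sigma(\mathcal D))\,\sigma_{\min}(X_-).$$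
   Context: Setting. Let $n,m,p,T$ be positive integers, $B\in\mathbb{R}^{n\times m}$, $C\in\mathbb{R}^{p\times n}$, $D\in\mathbb{R}^{p\times m}$, and let $\mathcal D=(X_-,X_+,U_-,Y_-)$ be data with $X_-,X_+\in\mathbb{R}^{n\times T}$, $U_-\in\mathbb{R}^{m\times T}$, $Y_-\in\mathbb{R}^{p\times T}$. With $M=I_n$, $N=0$: $P(\mathcal D)=X_-$, $Q=I_n$, $R(\mathcal D)=X_+-BU_-$. The maximum weakly unobservable coefficient space $\mathcal J^*(\mathcal D)$ is the largest subspace $\mathcal J\subseteq\mathbb{R}^T$ satisfying $$\begin{bmatrix}R(\mathcal D)\\ CP(\mathcal D)\end{bmatrix}\mathcal J\subseteq \big(QP(\mathcal D)\mathcal J\big)\times\{0\}+\operatorname{im}\begin{bmatrix}QB\\ D\end{bmatrix}.$$ $\mathcal S_+:=\mathcal J^*(\mathcal D)^\perp\cap\operatorname{im}(X_+^\mathsf{T})$, and $\operatorname{proj}_{\mathcal S_+}$ is orthogonal projection onto it. For $A\in\mathbb{R}^{n\times n}$, $d_{\mathrm{UNOBS}}(A):=\inf_{\lambda\in\mathbb{C}}\sigma_{\min}\!\left(\begin{bmatrix}\lambda I_n-A\\ C\end{bmatrix}\right)$, where $\sigma_{\min}$ of this $(n+p)\times n$ complex matrix is its smallest ($n$-th) singular value, and $d_{\mathrm{UNOBS}}(\Sigma(\mathcal D)):=\inf_{A\in\Sigma(\mathcal D)}d_{\mathrm{UNOBS}}(A)$. $\sigma_{\min}(X_-)$ denotes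 the smallest of the $\min(n,T)$ singular values of $X_-$. The infimum over an empty set is $+\infty$. *)

theory Defs
  imports "HOL-Analysis.Analysis"
begin

text \<open>Matrices are rendered with type-indexed dimensions: an n x T matrix is
  real^'t^'n (rows indexed by 'n, columns by 't).\<close>

definition orth_compl :: "('a::real_inner) set \<Rightarrow> 'a set" where
  "orth_compl S = {x. \<forall>y\<in>S. inner x y = 0}"

definition orth_proj :: "('a::real_inner) set \<Rightarrow> 'a \<Rightarrow> 'a" where
  "orth_proj S v = (THE w. w \<in> S \<and> (\<forall>s\<in>S. inner (v - w) s = 0))"

text \<open>Conditional-invariance condition defining weakly unobservable coefficient
  spaces, with M = I, N = 0: P = X_-, Q = I, R = X_+ - B U_-.\<close>
definition wu_cond ::
  "real^'t^'n \<Rightarrow> real^'t^'n \<Rightarrow> real^'t^'m \<Rightarrow> real^'m^'n \<Rightarrow> real^'n^'p \<Rightarrow> real^'m^'p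
   \<Rightarrow> (real^'t) set \<Rightarrow> bool" where
  "wu_cond Xm Xp U B C D J \<longleftrightarrow>
     (\<forall>j\<in>J. \<exists>j'\<in>J. \<exists>u.
        (Xp - B ** U) *v j = Xm *v j' + B *v u \<and> (C ** Xm) *v j = D *v u)"

definition Jstar ::
  "real^'t^'n \<Rightarrow> real^'t^'n \<Rightarrow> real^'t^'m \<Rightarrow> real^'m^'n \<Rightarrow> real^'n^'p \<Rightarrow> real^'m^'p
   \<Rightarrow> (real^'t) set" where
  "Jstar Xm Xp U B C D = (GREATEST J. subspace J \<and> wu_cond Xm Xp U B C D J)"

definition Sigma_data ::
  "real^'t^'n \<Rightarrow> real^'t^'n \<Rightarrow> real^'t^'m \<Rightarrow> real^'m^'n \<Rightarrow> (real^'n^'n) set" where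
  "Sigma_data Xm Xp U B = {A. Xp - B ** U = A ** Xm}"

definition real_eigenvalues :: "real^'k^'k \<Rightarrow> real set" where
  "real_eigenvalues H = {l. \<exists>x. x \<noteq> 0 \<and> H *v x = l *\<^sub>R x}"

definition complex_eigenvalues :: "complex^'k^'k \<Rightarrow> complex set" where
  "complex_eigenvalues H = {l. \<exists>x. x \<noteq> 0 \<and> H *v x = l *s x}"

definition cmat_adj :: "complex^'a^'b \<Rightarrow> complex^'b^'a" where
  "cmat_adj M = (\<chi> i j. cnj (M $ j $ i))"

text \<open>Smallest singular value of a real k x l matrix X: the smallest of its
  min(k,l) singular values, i.e. the square root of the smallest eigenvalue of
  the smaller of the two Gram matrices X X^T (k x k) and X^T X (l x l).\<close>
definition sigma_min_real :: "real^'l^'k \<Rightarrow> real" where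
  "sigma_min_real X =
     (if CARD('k) \<le> CARD('l) then sqrt (Min (real_eigenvalues (X ** transpose X)))
      else sqrt (Min (real_eigenvalues (transpose X ** X))))"

text \<open>Smallest (l-th) singular value of a complex k x l matrix with k \<ge> l:
  square root of the smallest eigenvalue of M^* M (Hermitian psd, real eigenvalues).\<close>
definition sigma_min_tall :: "complex^'l^'k \<Rightarrow> real" where
  "sigma_min_tall M = sqrt (Min (Re ` complex_eigenvalues (cmat_adj M ** M)))"

text \<open>The (n+p) x n complex matrix [lambda I - A; C].\<close>
definition unobs_matrix :: "complex \<Rightarrow> real^'n^'n \<Rightarrow> real^'n^'p \<Rightarrow> complex^'n^('n + 'p)" where
  "unobs_matrix lam A C = (\<chi> r j. case r of
       Inl i \<Rightarrow> (if i = j then lam else 0) - complex_of_real (A $ i $ j)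
     | Inr k \<Rightarrow> complex_of_real (C $ k $ j))"

definition d_unobs :: "real^'n^'n \<Rightarrow> real^'n^'p \<Rightarrow> real" where
  "d_unobs A C = (INF lam\<in>(UNIV::complex set). sigma_min_tall (unobs_matrix lam A C))"

definition d_unobs_set :: "(real^'n^'n) set \<Rightarrow> real^'n^'p \<Rightarrow> real" where
  "d_unobs_set S C = (INF A\<in>S. d_unobs A C)"

definition frob :: "complex^'b^'a \<Rightarrow> real" where
  "frob M = sqrt (\<Sum>i\<in>UNIV. \<Sum>j\<in>UNIV. (cmod (M $ i $ j))\<^sup>2)"

definition data_frob ::
  "complex^'t^'n \<Rightarrow> complex^'t^'n \<Rightarrow> complex^'t^'m \<Rightarrow> complex^'t^'p \<Rightarrow> real" where
  "data_frob dXm dXp dU dY =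
     sqrt ((frob dXm)\<^sup>2 + (frob dXp)\<^sup>2 + (frob dU)\<^sup>2 + (frob dY)\<^sup>2)"

definition cvec :: "real^'a \<Rightarrow> complex^'a" where
  "cvec x = (\<chi> i. complex_of_real (x $ i))"

definition S_plus ::
  "real^'t^'n \<Rightarrow> real^'t^'n \<Rightarrow> real^'t^'m \<Rightarrow> real^'m^'n \<Rightarrow> real^'n^'p \<Rightarrow> real^'m^'p
   \<Rightarrow> (real^'t) set" where
  "S_plus Xm Xp U B C D = orth_compl (Jstar Xm Xp U B C D) \<inter> range (\<lambda>y. transpose Xp *v y)"

definition F_set ::
  "real^'t^'n \<Rightarrow> real^'t^'n \<Rightarrow> real^'t^'m \<Rightarrow> real^'m^'n \<Rightarrow> real^'n^'p \<Rightarrow> real^'m^'p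
   \<Rightarrow> (real^'t) set" where
  "F_set Xm Xp U B C D =
     {v. v \<in> (orth_compl (Jstar Xm Xp U B C D) \<inter> {w. (C ** Xm) *v w = 0}) - {0} \<and>
         Xp *v v \<notin> (\<lambda>j. Xp *v j) ` Jstar Xm Xp U B C D}"

definition Delta_Xp ::
  "real^'t^'n \<Rightarrow> real^'t^'n \<Rightarrow> real^'t^'m \<Rightarrow> real^'m^'n \<Rightarrow> real^'n^'p \<Rightarrow> real^'m^'p
   \<Rightarrow> complex \<Rightarrow> real^'t \<Rightarrow> complex^'t^'n" where
  "Delta_Xp Xm Xp U B C D lam v =
     (let w = lam *s cvec (Xm *v v) - cvec (Xp *v v) + cvec ((B ** U) *v v);
          pr = orth_proj (S_plus Xm Xp U B C D) v;
          zeta = (1 / (norm pr)\<^sup>2) *\<^sub>R pr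
      in (\<chi> i t. w $ i * complex_of_real (zeta $ t)))"

end

theory Submission
  imports Defs
begin

text \<open>Fix \<open>A \<in> \<Sigma>(D)\<close>, \<open>\<lambda>\<close> and \<open>v \<in> F\<close>, and put \<open>x = X_- v\<close>. The perturbation is the rank-one
  matrix \<open>w \<zeta>\<^sup>T\<close> with \<open>w = \<lambda>x - A x\<close>, so its Frobenius norm is \<open>\<parallel>w\<parallel> / \<parallel>proj v\<parallel>\<close>. Since
  \<open>C x = 0\<close>, \<open>w\<close> is the image of \<open>x\<close> under \<open>[\<lambda>I - A; C]\<close>, hence \<open>\<parallel>w\<parallel> \<ge> d_UNOBS(A) \<parallel>x\<parallel>\<close>.
  The kernel of \<open>X_-\<close> is weakly unobservable and so contained in \<open>J*\<close>; as \<open>v \<bottom> J*\<close>, \<open>v\<close> lies in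
  the row space of \<open>X_-\<close>, giving \<open>\<parallel>x\<parallel> \<ge> \<sigma>_min(X_-) \<parallel>v\<parallel> \<ge> \<sigma>_min(X_-) \<parallel>proj v\<parallel>\<close>. Finally
  \<open>proj v \<noteq> 0\<close>: otherwise \<open>v\<close> is orthogonal to \<open>S_+ = (J* + ker X_+)\<^sup>\<bottom>\<close>, i.e. \<open>v \<in> J* + ker X_+\<close>,
  contradicting \<open>X_+ v \<notin> X_+ J*\<close>. Both singular value bounds rest on the variational
  (Rayleigh quotient) characterisation of the least eigenvalue of a Gram matrix.\<close>

definition eigenvalues :: "('a::real_vector \<Rightarrow> 'a) \<Rightarrow> real set" where
  "eigenvalues f = {l. \<exists>x. x \<noteq> 0 \<and> f x = l *\<^sub>R x}"

lemma eigenvaluesE: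
  assumes "l \<in> eigenvalues f"
  obtains x where "x \<noteq> 0" "f x = l *\<^sub>R x"
  using assms unfolding eigenvalues_def by blast

lemma quadratic_nonneg_imp_linear_coeff_zero:
  fixes a b :: real
  assumes "\<And>t. 0 \<le> 2*t*a + t^2*b" and "b \<ge> 0"
  shows "a = 0"
proof -
  have "0 \<le> 2*(-a/(b+1))*a + (-a/(b+1))^2*b" by (rule assms(1))
  also have "\<dots> = -(a^2*(b+2))/(b+1)^2"
    using assms(2) by (simp add: divide_simps power2_eq_square) (simp add: algebra_simps)
  finally have "a^2 * (b+2) \<le> 0"
    using assms(2) by (simp add: divide_le_0_iff zero_le_divide_iff)
  then show ?thesis
    using assms(2) by (smt (verit) mult_le_0_iff zero_le_power2 power2_less_eq_zero_iff)
qed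

lemma self_adjoint_nonneg_form_zero_imp_zero:
  fixes g :: "'a::real_inner \<Rightarrow> 'a"
  assumes lin: "linear g" and sym: "\<And>x y. inner (g x) y = inner x (g y)"
    and nonneg: "\<And>y. 0 \<le> inner y (g y)" and "inner x (g x) = 0"
  shows "g x = 0"
proof -
  have "inner w (g x) = 0" for w
  proof (rule quadratic_nonneg_imp_linear_coeff_zero)
    fix t :: real
    have "0 \<le> inner (x + t *\<^sub>R w) (g (x + t *\<^sub>R w))" by (rule nonneg)
    also have "\<dots> = inner x (g x) + t * inner x (g w) + t * inner w (g x) + t^2 * inner w (g w)"
      by (simp add: linear_add[OF lin] linear_scale[OF lin] power2_eq_square algebra_simps)
    also have "\<dots> = 2*t*inner w (g x) + t^2 * inner w (g w)"
      using assms(4) sym[of x w] by (simp add: inner_commute)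
    finally show "0 \<le> 2*t*inner w (g x) + t^2 * inner w (g w)" .
  qed (rule nonneg)
  then show ?thesis by (metis inner_eq_zero_iff)
qed

lemma self_adjoint_Rayleigh_minimizer:
  fixes f :: "'a::euclidean_space \<Rightarrow> 'a"
  assumes lin: "linear f" and sym: "\<And>x y. inner (f x) y = inner x (f y)"
  obtains mu x where "x \<noteq> 0" "f x = mu *\<^sub>R x" "\<And>y. mu * (norm y)^2 \<le> inner y (f y)"
proof -
  have "continuous_on (sphere 0 1) (\<lambda>y. inner y (f y))"
    using lin by (intro continuous_intros linear_continuous_on) (simp add: linear_linear)
  moreover obtain b :: 'a where "b \<in> Basis"
    using nonempty_Basis by blast
  then have "b \<in> sphere 0 1" by simp
  ultimately obtain x where "x \<in> sphere 0 1"
    and min: "\<And>y. y \<in> sphere 0 1 \<Longrightarrow> inner x (f x) \<le> inner y (f y)"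
    using continuous_attains_inf[OF compact_sphere] by blast
  then have x: "norm x = 1" by simp
  define mu where "mu = inner x (f x)"
  have Rayleigh: "mu * (norm y)^2 \<le> inner y (f y)" for y
  proof (cases "y = 0")
    case False
    have "mu \<le> inner ((1/norm y) *\<^sub>R y) (f ((1/norm y) *\<^sub>R y))"
      unfolding mu_def using False by (intro min) simp
    also have "\<dots> = inner y (f y) / (norm y)^2"
      by (simp add: linear_scale[OF lin] power2_eq_square)
    finally show ?thesis using False by (simp add: pos_le_divide_eq)
  qed (simp add: linear_0[OF lin])
  define g where "g y = f y - mu *\<^sub>R y" for y
  have "g x = 0"
  proof (rule self_adjoint_nonneg_form_zero_imp_zero[where g = g])
    show "linear g" unfolding g_def
      by (rule linearI) (simp_all add: linear_add[OF lin] linear_scale[OF lin] algebra_simps)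
    show "inner (g y) z = inner y (g z)" for y z
      by (simp add: g_def inner_diff_left inner_diff_right sym)
    show "0 \<le> inner y (g y)" for y
      using Rayleigh[of y] by (simp add: g_def inner_diff_right power2_norm_eq_inner)
    show "inner x (g x) = 0"
      using x by (simp add: g_def mu_def inner_diff_right power2_norm_eq_inner[symmetric])
  qed
  moreover have "x \<noteq> 0" using x by auto
  ultimately show ?thesis
    using that[of x mu] Rayleigh by (simp add: g_def)
qed

lemma self_adjoint_eigenvalues_finite:
  fixes f :: "'a::euclidean_space \<Rightarrow> 'a"
  assumes sym: "\<And>x y. inner (f x) y = inner x (f y)"
  shows "finite (eigenvalues f)"
proof -
  define ev where "ev l = (SOME x. x \<noteq> 0 \<and> f x = l *\<^sub>R x)" for l
  have ev: "ev l \<noteq> 0" "f (ev l) = l *\<^sub>R ev l" if "l \<in> eigenvalues f" for l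
    using someI_ex[of "\<lambda>x. x \<noteq> 0 \<and> f x = l *\<^sub>R x"] that
    unfolding ev_def eigenvalues_def by auto
  have inj: "inj_on ev (eigenvalues f)"
  proof (rule inj_onI)
    fix a b assume ab: "a \<in> eigenvalues f" "b \<in> eigenvalues f" "ev a = ev b"
    then have "a *\<^sub>R ev a = b *\<^sub>R ev a"
      using ev(2)[OF ab(1)] ev(2)[OF ab(2)] by metis
    then show "a = b" using ev(1)[OF ab(1)] by simp
  qed
  have "pairwise orthogonal (ev ` eigenvalues f)"
  proof (clarsimp simp: pairwise_def orthogonal_def)
    fix a b assume ab: "a \<in> eigenvalues f" "b \<in> eigenvalues f" "ev a \<noteq> ev b"
    have "a * inner (ev a) (ev b) = inner (f (ev a)) (ev b)" using ev[OF ab(1)] by simp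
    also have "\<dots> = b * inner (ev a) (ev b)" using ev[OF ab(2)] by (simp add: sym)
    finally show "inner (ev a) (ev b) = 0" using ab(3) by auto
  qed
  moreover have "0 \<notin> ev ` eigenvalues f" using ev by auto
  ultimately have "finite (ev ` eigenvalues f)"
    using pairwise_orthogonal_independent independent_bound by blast
  then show ?thesis by (rule finite_imageD[OF _ inj])
qed

lemma self_adjoint_Min_eigenvalue:
  fixes f :: "'a::euclidean_space \<Rightarrow> 'a"
  assumes lin: "linear f" and sym: "\<And>x y. inner (f x) y = inner x (f y)"
  shows "Min (eigenvalues f) \<in> eigenvalues f"
    and "Min (eigenvalues f) * (norm y)^2 \<le> inner y (f y)"
proof -
  obtain mu x where x: "x \<noteq> 0" "f x = mu *\<^sub>R x"
    and Rayleigh: "\<And>y. mu * (norm y)^2 \<le> inner y (f y)"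
    using self_adjoint_Rayleigh_minimizer[OF lin sym] by blast
  have "mu \<le> l" if l: "l \<in> eigenvalues f" for l
  proof -
    obtain z where z: "z \<noteq> 0" "f z = l *\<^sub>R z" using l by (rule eigenvaluesE)
    then have "mu * (norm z)^2 \<le> l * (norm z)^2"
      using Rayleigh[of z] by (simp add: dot_square_norm)
    then show ?thesis using z(1) by simp
  qed
  moreover have "mu \<in> eigenvalues f" using x unfolding eigenvalues_def by blast
  ultimately have "Min (eigenvalues f) = mu"
    using self_adjoint_eigenvalues_finite[OF sym] by (intro Min_eqI) auto
  then show "Min (eigenvalues f) \<in> eigenvalues f" "Min (eigenvalues f) * (norm y)^2 \<le> inner y (f y)"
    using \<open>mu \<in> eigenvalues f\<close> Rayleigh by auto
qed

lemma Gram_Min_eigenvalue: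
  fixes f :: "'a::euclidean_space \<Rightarrow> 'a" and g :: "'a \<Rightarrow> 'b::real_inner"
  assumes lin: "linear f" and Gram: "\<And>x y. inner x (f y) = inner (g x) (g y)"
  shows "0 \<le> Min (eigenvalues f)"
    and "Min (eigenvalues f) * (norm y)^2 \<le> (norm (g y))^2"
proof -
  have sym: "inner (f x) y = inner x (f y)" for x y
  proof -
    have "inner (f x) y = inner (g y) (g x)" by (simp add: inner_commute Gram)
    also have "\<dots> = inner x (f y)" by (simp add: inner_commute Gram)
    finally show ?thesis .
  qed
  obtain x where "x \<noteq> 0" "f x = Min (eigenvalues f) *\<^sub>R x"
    by (rule eigenvaluesE[OF self_adjoint_Min_eigenvalue(1)[OF lin sym]])
  then have "0 \<le> Min (eigenvalues f) * (norm x)^2"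
    using Gram[of x x] by (simp add: dot_square_norm)
  then show "0 \<le> Min (eigenvalues f)"
    using \<open>x \<noteq> 0\<close> by (simp add: zero_le_mult_iff)
  show "Min (eigenvalues f) * (norm y)^2 \<le> (norm (g y))^2"
    using self_adjoint_Min_eigenvalue(2)[OF lin sym, of y] Gram[of y y]
    by (simp add: dot_square_norm)
qed

lemma sqrt_mult_le_of_power2_le:
  fixes a b c :: real
  assumes "0 \<le> c" "c * a^2 \<le> b^2" "0 \<le> b"
  shows "sqrt c * a \<le> b"
proof -
  have "sqrt c * a \<le> sqrt (c * a^2)"
    using assms(1) by (simp add: real_sqrt_mult mult_left_mono)
  also have "\<dots> \<le> b"
    using assms(2,3) real_sqrt_le_mono by fastforce
  finally show ?thesis .
qed

lemma orth_compl_eq_orthogonal_comp: "orth_compl S = S\<^sup>\<bottom>"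
  by (auto simp: orth_compl_def orthogonal_comp_def orthogonal_def inner_commute)

lemma inner_transpose_mult:
  fixes A :: "real^'a::finite^'b::finite"
  shows "inner (transpose A *v u) w = inner u (A *v w)"
  by (simp add: dot_lmul_matrix)

lemma range_transpose_eq_orthogonal_comp_kernel:
  fixes X :: "real^'t::finite^'n::finite"
  shows "range (\<lambda>y. transpose X *v y) = {k. X *v k = 0}\<^sup>\<bottom>"
proof -
  have "subspace (range (\<lambda>y. transpose X *v y))"
    by (rule linear_subspace_image[OF matrix_vector_mul_linear subspace_UNIV])
  moreover have "{k. X *v k = 0} = (range (\<lambda>y. transpose X *v y))\<^sup>\<bottom>"
    using ker_orthogonal_comp_adjoint[OF matrix_vector_mul_linear[of X]]
    unfolding adjoint_matrix by (simp add: vimage_def)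
  ultimately show ?thesis
    by (simp only: orthogonal_comp_self)
qed

lemma orthogonal_comp_Int_orthogonal_comp:
  fixes J K :: "'a::euclidean_space set"
  assumes "subspace J" "subspace K"
  shows "(J\<^sup>\<bottom> \<inter> K\<^sup>\<bottom>)\<^sup>\<bottom> = J + K"
proof -
  have "J + K = {x + y |x y. x \<in> J \<and> y \<in> K}" by (auto simp: set_plus_def)
  then have "subspace (J + K)" using assms by (simp add: subspace_sums)
  moreover have "J\<^sup>\<bottom> \<inter> K\<^sup>\<bottom> = (J + K)\<^sup>\<bottom>"
    using subspace_0[OF assms(1)] subspace_0[OF assms(2)]
    by (force simp: orthogonal_comp_def orthogonal_def set_plus_def inner_add_left)
  ultimately show ?thesis by (simp add: orthogonal_comp_self)
qed

lemma orth_proj_eqI: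
  fixes S :: "'a::real_inner set"
  assumes "subspace S" "w \<in> S" "\<forall>s\<in>S. inner (v - w) s = 0"
  shows "orth_proj S v = w"
  unfolding orth_proj_def
proof (rule the_equality)
  fix w' assume w': "w' \<in> S \<and> (\<forall>s\<in>S. inner (v - w') s = 0)"
  have "inner (w' - w) (w' - w) = inner (v - w) (w' - w) - inner (v - w') (w' - w)"
    by (simp add: inner_diff_left)
  also have "\<dots> = 0" using assms w' by (simp add: subspace_diff)
  finally show "w' = w" by simp
qed (use assms in blast)

lemma orth_proj_in_orthogonal:
  fixes S :: "'a::euclidean_space set"
  assumes "subspace S"
  shows "orth_proj S v \<in> S" and "\<forall>s\<in>S. inner (v - orth_proj S v) s = 0"
proof -
  obtain w u where "v = w + u" "w \<in> S" "u \<in> S\<^sup>\<bottom>"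
    using subspace_sum_orthogonal_comp[OF assms] set_plus_elim by blast
  then have "w \<in> S \<and> (\<forall>s\<in>S. inner (v - w) s = 0)"
    by (simp add: orthogonal_comp_def orthogonal_def inner_commute)
  moreover from this have "orth_proj S v = w" using assms by (blast intro: orth_proj_eqI)
  ultimately show "orth_proj S v \<in> S" "\<forall>s\<in>S. inner (v - orth_proj S v) s = 0" by auto
qed

lemma norm_orth_proj_le:
  fixes S :: "'a::euclidean_space set"
  assumes "subspace S"
  shows "norm (orth_proj S v) \<le> norm v"
proof -
  let ?p = "orth_proj S v"
  have "inner (v - ?p) ?p = 0"
    using orth_proj_in_orthogonal[OF assms] by blast
  then have "(norm ?p)^2 = inner v ?p"
    by (simp add: power2_norm_eq_inner inner_diff_left)
  also have "\<dots> \<le> norm v * norm ?p" by (rule norm_cauchy_schwarz)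
  finally have "norm ?p * norm ?p \<le> norm v * norm ?p"
    by (simp add: power2_eq_square)
  then show ?thesis
    by (cases "?p = 0") auto
qed

lemma inner_transpose_mult_Gram:
  fixes Y :: "real^'a::finite^'b::finite"
  shows "inner x ((transpose Y ** Y) *v y) = inner (Y *v x) (Y *v y)"
  by (metis inner_commute inner_transpose_mult matrix_vector_mul_assoc)

lemma real_Gram_Min_eigenvalue:
  fixes Y :: "real^'a::finite^'b::finite"
  shows "0 \<le> Min (real_eigenvalues (transpose Y ** Y))"
    and "Min (real_eigenvalues (transpose Y ** Y)) * (norm y)^2 \<le> (norm (Y *v y))^2"
proof -
  have "real_eigenvalues (transpose Y ** Y) = eigenvalues (\<lambda>x. (transpose Y ** Y) *v x)"
    by (simp add: real_eigenvalues_def eigenvalues_def)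
  then show "0 \<le> Min (real_eigenvalues (transpose Y ** Y))"
    and "Min (real_eigenvalues (transpose Y ** Y)) * (norm y)^2 \<le> (norm (Y *v y))^2"
    using Gram_Min_eigenvalue[of "\<lambda>x. (transpose Y ** Y) *v x" "\<lambda>x. Y *v x"]
    by (simp_all add: inner_transpose_mult_Gram)
qed

lemma sigma_min_real_nonneg: "0 \<le> sigma_min_real X"
  using real_Gram_Min_eigenvalue(1)[of X] real_Gram_Min_eigenvalue(1)[of "transpose X"]
  by (simp add: sigma_min_real_def)

lemma sigma_min_real_mult_le:
  fixes X :: "real^'t::finite^'n::finite"
  assumes v: "v \<in> {k. X *v k = 0}\<^sup>\<bottom>"
  shows "sigma_min_real X * norm v \<le> norm (X *v v)"
proof (cases "CARD('n) \<le> CARD('t)")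
  case True
  \<comment> \<open>Now \<open>\<sigma>_min(X)\<^sup>2\<close> is the least eigenvalue \<open>c\<close> of \<open>X X\<^sup>T\<close>, which bounds \<open>\<parallel>X\<^sup>T y\<parallel>\<close> rather than
    \<open>\<parallel>X v\<parallel>\<close>; for \<open>v = X\<^sup>T y\<close> in the row space, expanding \<open>0 \<le> \<parallel>X X\<^sup>T y - c y\<parallel>\<^sup>2\<close> transfers it.\<close>
  define c where "c = Min (real_eigenvalues (X ** transpose X))"
  have c: "0 \<le> c" "\<And>y. c * (norm y)^2 \<le> (norm (transpose X *v y))^2"
    using real_Gram_Min_eigenvalue[of "transpose X"] unfolding c_def by simp_all
  obtain y where y: "v = transpose X *v y"
    using v range_transpose_eq_orthogonal_comp_kernel[of X] by blast
  define z where "z = X *v v"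
  have vz: "inner v v = inner y z"
    unfolding z_def using y by (metis inner_transpose_mult)
  have "0 \<le> inner (z - c *\<^sub>R y) (z - c *\<^sub>R y)" by simp
  also have "\<dots> = inner z z - 2 * c * inner y z + c * (c * inner y y)"
    by (simp add: inner_diff_left inner_diff_right inner_commute algebra_simps)
  also have "\<dots> = (norm z)^2 - 2 * c * (norm v)^2 + c * (c * (norm y)^2)"
    by (simp add: vz[symmetric] dot_square_norm)
  also have "\<dots> \<le> (norm z)^2 - 2 * c * (norm v)^2 + c * (norm v)^2"
    using c y by (simp add: mult_left_mono)
  finally have "c * (norm v)^2 \<le> (norm z)^2" by simp
  then show ?thesis
    using True c(1) by (simp add: sigma_min_real_def c_def z_def sqrt_mult_le_of_power2_le)
next
  case False
  then show ?thesis
    using real_Gram_Min_eigenvalue[of X] by (simp add: sigma_min_real_def sqrt_mult_le_of_power2_le)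
qed

lemma inner_complex_eq_Re_cnj: "inner z w = Re (cnj z * w)"
  by (simp add: inner_complex_def)

lemma inner_cmat_adj:
  fixes M :: "complex^'l::finite^'k::finite"
  shows "inner (M *v a) b = inner a (cmat_adj M *v b)"
proof -
  have "inner (M *v a) b = Re (\<Sum>i\<in>UNIV. \<Sum>j\<in>UNIV. cnj (M$i$j) * cnj (a$j) * b$i)"
    by (simp add: inner_vec_def matrix_vector_mult_def inner_complex_eq_Re_cnj Re_sum sum_distrib_right)
  also have "\<dots> = Re (\<Sum>j\<in>UNIV. \<Sum>i\<in>UNIV. cnj (M$i$j) * cnj (a$j) * b$i)"
    by (subst sum.swap) simp
  also have "\<dots> = inner a (cmat_adj M *v b)"
    by (simp add: inner_vec_def matrix_vector_mult_def inner_complex_eq_Re_cnj Re_sum sum_distrib_left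
        cmat_adj_def mult.assoc mult.left_commute)
  finally show ?thesis .
qed

lemma inner_smult_smult:
  fixes x :: "complex^'n::finite"
  shows "inner (c *s x) (d *s x) = Re (cnj c * d) * (norm x)^2"
proof -
  have "inner (c * z) (d * z) = Re (cnj c * d) * inner z z" for z :: complex
    by (simp add: inner_complex_def) algebra
  then show ?thesis
    by (simp add: inner_vec_def sum_distrib_left power2_norm_eq_inner[of x])
qed

lemma of_real_smult_eq_scaleR: "complex_of_real r *s x = r *\<^sub>R x"
  unfolding vec_eq_iff
  by (intro allI) (simp only: vector_scaleR_component vector_smult_component, simp add: scaleR_conv_of_real)

lemma Re_complex_eigenvalues_self_adjoint:
  fixes H :: "complex^'k::finite^'k"
  assumes sym: "\<And>x y. inner (H *v x) y = inner x (H *v y)"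
  shows "Re ` complex_eigenvalues H = eigenvalues (\<lambda>x. H *v x)"
proof (intro equalityI subsetI)
  fix r assume "r \<in> Re ` complex_eigenvalues H"
  then obtain l x where lx: "r = Re l" "x \<noteq> 0" "H *v x = l *s x"
    unfolding complex_eigenvalues_def by blast
  have "Im l * (norm x)^2 = inner (H *v x) (\<i> *s x)"
    using lx(3) by (simp add: inner_smult_smult)
  also have "\<dots> = inner x (H *v (\<i> *s x))" by (rule sym)
  also have "\<dots> = inner x ((\<i> * l) *s x)"
    using lx(3) by (simp add: vector_scalar_commute vector_smult_assoc)
  also have "\<dots> = - Im l * (norm x)^2"
    using inner_smult_smult[of 1 x "\<i> * l"] by simp
  finally have "Im l = 0" using lx(2) by simp
  then have "l = complex_of_real r" using lx(1) by (simp add: complex_eq_iff)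
  then show "r \<in> eigenvalues (\<lambda>x. H *v x)"
    using lx(2,3) by (auto simp: eigenvalues_def of_real_smult_eq_scaleR)
next
  fix r assume "r \<in> eigenvalues (\<lambda>x. H *v x)"
  then have "complex_of_real r \<in> complex_eigenvalues H"
    by (auto simp: eigenvalues_def complex_eigenvalues_def of_real_smult_eq_scaleR)
  then show "r \<in> Re ` complex_eigenvalues H" by force
qed

lemma sigma_min_tall_nonneg_mult_le:
  fixes M :: "complex^'l::finite^'k::finite"
  shows "0 \<le> sigma_min_tall M" and "sigma_min_tall M * norm y \<le> norm (M *v y)"
proof -
  let ?H = "cmat_adj M ** M"
  have Gram: "inner x (?H *v y) = inner (M *v x) (M *v y)" for x y
    by (simp add: inner_cmat_adj matrix_vector_mul_assoc[symmetric])
  then have "Re ` complex_eigenvalues ?H = eigenvalues (\<lambda>x. ?H *v x)"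
    by (intro Re_complex_eigenvalues_self_adjoint) (metis inner_commute)
  then have "0 \<le> Min (Re ` complex_eigenvalues ?H)"
    and "Min (Re ` complex_eigenvalues ?H) * (norm y)^2 \<le> (norm (M *v y))^2"
    using Gram_Min_eigenvalue[of "\<lambda>x. ?H *v x" "\<lambda>x. M *v x", OF _ Gram] by simp_all
  then show "0 \<le> sigma_min_tall M" "sigma_min_tall M * norm y \<le> norm (M *v y)"
    by (simp_all add: sigma_min_tall_def sqrt_mult_le_of_power2_le)
qed

lemma Greatest_subspace_closed_under_sums:
  fixes P :: "'a::euclidean_space set \<Rightarrow> bool"
  assumes P0: "P {0}"
    and sums: "\<And>J K. subspace J \<Longrightarrow> subspace K \<Longrightarrow> P J \<Longrightarrow> P K \<Longrightarrow> P {x + y |x y. x \<in> J \<and> y \<in> K}"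
  shows "subspace (GREATEST J. subspace J \<and> P J)"
    and "subspace J \<Longrightarrow> P J \<Longrightarrow> J \<subseteq> (GREATEST J. subspace J \<and> P J)"
proof -
  let ?Q = "\<lambda>J. subspace J \<and> P J"
  have "?Q {0}" using P0 by (simp add: subspace_single_0)
  moreover have "\<forall>J. ?Q J \<longrightarrow> dim J < DIM('a) + 1"
    by (metis dim_subset_UNIV less_Suc_eq_le Suc_eq_plus1)
  ultimately obtain J0 where J0: "?Q J0" and max: "\<And>J. ?Q J \<Longrightarrow> dim J \<le> dim J0"
    using ex_has_greatest_nat[of ?Q "{0}" dim] by blast
  \<comment> \<open>a subspace of maximal dimension absorbs every other one through their sum\<close>
  have greatest: "J \<subseteq> J0" if J: "?Q J" for J
  proof -
    let ?S = "{x + y |x y. x \<in> J0 \<and> y \<in> J}"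
    have S: "?Q ?S" using J0 J sums subspace_sums by blast
    have "J0 \<subseteq> ?S" using subspace_0[of J] J by force
    then have "J0 = ?S" using S J0 max[OF S] by (intro subspace_dim_equal) auto
    moreover have "J \<subseteq> ?S" using subspace_0[of J0] J0 by force
    ultimately show ?thesis by simp
  qed
  then have "(GREATEST J. ?Q J) = J0" using J0 by (intro Greatest_equality) auto
  then show "subspace (GREATEST J. ?Q J)" "subspace J \<Longrightarrow> P J \<Longrightarrow> J \<subseteq> (GREATEST J. ?Q J)"
    using J0 greatest by auto
qed

lemma wu_cond_sums:
  assumes "wu_cond Xm Xp U B C D J" "wu_cond Xm Xp U B C D K"
  shows "wu_cond Xm Xp U B C D {x + y |x y. x \<in> J \<and> y \<in> K}"
  unfolding wu_cond_def
proof
  fix j assume "j \<in> {x + y |x y. x \<in> J \<and> y \<in> K}"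
  then obtain a b where ab: "j = a + b" "a \<in> J" "b \<in> K" by blast
  obtain a' ua where a': "a' \<in> J" "(Xp - B ** U) *v a = Xm *v a' + B *v ua" "(C ** Xm) *v a = D *v ua"
    using assms(1) ab(2) unfolding wu_cond_def by blast
  obtain b' ub where b': "b' \<in> K" "(Xp - B ** U) *v b = Xm *v b' + B *v ub" "(C ** Xm) *v b = D *v ub"
    using assms(2) ab(3) unfolding wu_cond_def by blast
  have "(Xp - B ** U) *v j = Xm *v (a' + b') + B *v (ua + ub)"
    and "(C ** Xm) *v j = D *v (ua + ub)"
    using a' b' ab by (simp_all add: matrix_vector_right_distrib)
  moreover have "a' + b' \<in> {x + y |x y. x \<in> J \<and> y \<in> K}" using a' b' by blast
  ultimately show "\<exists>j'\<in>{x + y |x y. x \<in> J \<and> y \<in> K}. \<exists>u.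
      (Xp - B ** U) *v j = Xm *v j' + B *v u \<and> (C ** Xm) *v j = D *v u"
    by blast
qed

lemma wu_cond_zero: "wu_cond Xm Xp U B C D {0}"
  unfolding wu_cond_def by (auto intro!: exI[of _ 0])

lemma subspace_Jstar: "subspace (Jstar Xm Xp U B C D)"
  unfolding Jstar_def
  by (rule Greatest_subspace_closed_under_sums(1)[OF wu_cond_zero wu_cond_sums])

lemma subset_Jstar:
  assumes "subspace J" "wu_cond Xm Xp U B C D J"
  shows "J \<subseteq> Jstar Xm Xp U B C D"
  unfolding Jstar_def
  by (rule Greatest_subspace_closed_under_sums(2)[OF wu_cond_zero wu_cond_sums assms])

lemma kernel_subset_Jstar:
  fixes Xm Xp :: "real^'t::finite^'n::finite" and U :: "real^'t^'m::finite"
    and C :: "real^'n^'p::finite"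
  assumes "A \<in> Sigma_data Xm Xp U B"
  shows "{k. Xm *v k = 0} \<subseteq> Jstar Xm Xp U B C D"
proof (rule subset_Jstar)
  show "subspace {k. Xm *v k = 0}" by (rule linear_subspace_kernel) simp
  from assms have A: "Xp - B ** U = A ** Xm" by (simp add: Sigma_data_def)
  show "wu_cond Xm Xp U B C D {k. Xm *v k = 0}"
    unfolding wu_cond_def
  proof
    fix k assume "k \<in> {k. Xm *v k = 0}"
    then have "(Xp - B ** U) *v k = Xm *v 0 + B *v 0" and "(C ** Xm) *v k = D *v 0"
      unfolding A by (simp_all add: matrix_vector_mul_assoc[symmetric])
    then show "\<exists>j'\<in>{k. Xm *v k = 0}. \<exists>u.
        (Xp - B ** U) *v k = Xm *v j' + B *v u \<and> (C ** Xm) *v k = D *v u"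
      by (intro bexI[of _ 0] exI[of _ 0]) auto
  qed
qed

lemma S_plus_eq:
  "S_plus Xm Xp U B C D = (Jstar Xm Xp U B C D)\<^sup>\<bottom> \<inter> {k. Xp *v k = 0}\<^sup>\<bottom>"
  unfolding S_plus_def orth_compl_eq_orthogonal_comp range_transpose_eq_orthogonal_comp_kernel ..

lemma subspace_S_plus: "subspace (S_plus Xm Xp U B C D)"
  unfolding S_plus_eq by (intro subspace_inter subspace_orthogonal_comp)

lemma orth_proj_S_plus_nonzero:
  fixes Xm Xp :: "real^'t::finite^'n::finite"
  assumes v: "v \<in> F_set Xm Xp U B C D"
  shows "orth_proj (S_plus Xm Xp U B C D) v \<noteq> 0"
proof
  let ?J = "Jstar Xm Xp U B C D" and ?K = "{k :: real^'t. Xp *v k = 0}"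
  assume "orth_proj (S_plus Xm Xp U B C D) v = 0"
  then have "\<forall>s\<in>S_plus Xm Xp U B C D. inner v s = 0"
    using orth_proj_in_orthogonal(2)[OF subspace_S_plus[of Xm Xp U B C D], of v] by simp
  then have "v \<in> (?J\<^sup>\<bottom> \<inter> ?K\<^sup>\<bottom>)\<^sup>\<bottom>"
    unfolding S_plus_eq by (simp add: orthogonal_comp_def orthogonal_def inner_commute)
  moreover have "subspace ?K" by (rule linear_subspace_kernel) simp
  ultimately have "v \<in> ?J + ?K"
    using orthogonal_comp_Int_orthogonal_comp[OF subspace_Jstar] by blast
  then obtain a b where "v = a + b" "a \<in> ?J" "Xp *v b = 0"
    by (auto elim: set_plus_elim)
  then have "Xp *v v \<in> (\<lambda>j. Xp *v j) ` ?J"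
    by (simp add: matrix_vector_right_distrib)
  then show False using v by (simp add: F_set_def)
qed

lemma power2_norm_vec: "(norm (x :: 'a::real_inner^'n::finite))^2 = (\<Sum>i\<in>UNIV. (norm (x $ i))^2)"
  by (simp add: power2_norm_eq_inner inner_vec_def)

lemma norm_cvec [simp]: "norm (cvec x) = norm x"
proof -
  have "(norm (cvec x))^2 = (norm x)^2" by (simp add: power2_norm_vec cvec_def)
  then show ?thesis by (simp add: power2_eq_iff_nonneg)
qed

lemma cvec_diff: "cvec (x - y) = cvec x - cvec y"
  by (simp add: cvec_def vec_eq_iff)

lemma frob_outer_product:
  fixes w :: "complex^'n::finite" and z :: "real^'t::finite"
  shows "frob ((\<chi> i t. w $ i * complex_of_real (z $ t)) :: complex^'t^'n) = norm w * norm z"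
proof -
  have "frob ((\<chi> i t. w $ i * complex_of_real (z $ t)) :: complex^'t^'n)
      = sqrt (\<Sum>i\<in>UNIV. \<Sum>t\<in>UNIV. (norm (w $ i))^2 * (norm (z $ t))^2)"
    by (simp add: frob_def norm_mult power_mult_distrib)
  also have "\<dots> = sqrt ((norm w)^2 * (norm z)^2)"
    by (simp add: power2_norm_vec sum_distrib_left sum_distrib_right) (rule sum.swap)
  also have "\<dots> = norm w * norm z" by (simp add: real_sqrt_mult)
  finally show ?thesis .
qed

lemma norm_unobs_matrix_mult:
  fixes A :: "real^'n::finite^'n" and C :: "real^'n^'p::finite"
  assumes "C *v x = 0"
  shows "norm (unobs_matrix lam A C *v cvec x) = norm (lam *s cvec x - cvec (A *v x))"
proof -
  let ?y = "unobs_matrix lam A C *v cvec x" and ?w = "lam *s cvec x - cvec (A *v x)"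
  have top: "?y $ Inl i = ?w $ i" for i
  proof -
    have "?y $ Inl i = (\<Sum>j\<in>UNIV. ((if i = j then lam else 0) - complex_of_real (A $ i $ j))
        * complex_of_real (x $ j))"
      by (simp add: unobs_matrix_def matrix_vector_mult_def cvec_def)
    also have "\<dots> = (\<Sum>j\<in>UNIV. (if i = j then lam * complex_of_real (x $ j) else 0))
        - (\<Sum>j\<in>UNIV. complex_of_real (A $ i $ j) * complex_of_real (x $ j))"
      by (subst sum_subtractf[symmetric]) (rule sum.cong, auto simp: left_diff_distrib)
    also have "\<dots> = ?w $ i"
      by (simp add: matrix_vector_mult_def cvec_def)
    finally show ?thesis .
  qed
  have bottom: "?y $ Inr k = complex_of_real ((C *v x) $ k)" for k
    by (simp add: unobs_matrix_def matrix_vector_mult_def cvec_def)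
  have "(norm ?y)^2 = (\<Sum>i\<in>UNIV. (norm (?y $ Inl i))^2) + (\<Sum>k\<in>UNIV. (norm (?y $ Inr k))^2)"
    by (simp add: power2_norm_vec UNIV_Plus_UNIV[symmetric] sum.Plus del: UNIV_Plus_UNIV)
  also have "\<dots> = (norm ?w)^2" by (simp add: top bottom assms power2_norm_vec)
  finally show ?thesis by (simp add: power2_eq_iff_nonneg)
qed

text \<open>The identity also holds for a vanishing projection, both sides being \<open>0\<close>
  because \<open>x / 0 = 0\<close>.\<close>

lemma data_frob_Delta_Xp:
  fixes Xm Xp :: "real^'t::finite^'n::finite" and U :: "real^'t^'m::finite"
    and C :: "real^'n^'p::finite"
  assumes "A \<in> Sigma_data Xm Xp U B"
  shows "data_frob (0::complex^'t^'n) (Delta_Xp Xm Xp U B C D lam v) (0::complex^'t^'m) (0::complex^'t^'p)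
    = norm (lam *s cvec (Xm *v v) - cvec (A *v (Xm *v v))) / norm (orth_proj (S_plus Xm Xp U B C D) v)"
proof -
  let ?p = "orth_proj (S_plus Xm Xp U B C D) v"
  have "(Xp - B ** U) *v v = A *v (Xm *v v)"
    using assms by (simp add: Sigma_data_def matrix_vector_mul_assoc)
  then have "cvec (A *v (Xm *v v)) = cvec (Xp *v v) - cvec ((B ** U) *v v)"
    by (simp flip: cvec_diff matrix_vector_mult_diff_rdistrib)
  then have "lam *s cvec (Xm *v v) - cvec (Xp *v v) + cvec ((B ** U) *v v)
      = lam *s cvec (Xm *v v) - cvec (A *v (Xm *v v))"
    by simp
  then have "frob (Delta_Xp Xm Xp U B C D lam v)
      = norm (lam *s cvec (Xm *v v) - cvec (A *v (Xm *v v))) * norm ((1 / (norm ?p)^2) *\<^sub>R ?p)"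
    unfolding Delta_Xp_def Let_def by (simp only: frob_outer_product)
  also have "\<dots> = norm (lam *s cvec (Xm *v v) - cvec (A *v (Xm *v v))) / norm ?p"
  proof -
    have "norm ((1 / (norm ?p)^2) *\<^sub>R ?p) = 1 / norm ?p" by (simp add: power2_eq_square)
    then show ?thesis by simp
  qed
  finally show ?thesis by (simp add: data_frob_def frob_def)
qed

lemma d_unobs_le_sigma_min_tall: "d_unobs A C \<le> sigma_min_tall (unobs_matrix lam A C)"
  unfolding d_unobs_def
  by (rule cINF_lower) (auto intro: bdd_belowI2[where m = 0] sigma_min_tall_nonneg_mult_le(1))

lemma d_unobs_nonneg: "0 \<le> d_unobs A C"
  unfolding d_unobs_def by (rule cINF_greatest) (auto intro: sigma_min_tall_nonneg_mult_le(1))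

lemma d_unobs_set_le: "A \<in> S \<Longrightarrow> d_unobs_set S C \<le> d_unobs A C"
  unfolding d_unobs_set_def
  by (rule cINF_lower) (auto intro: bdd_belowI2[where m = 0] d_unobs_nonneg)

lemma Delta_Xp_lower_bound:
  fixes Xm Xp :: "real^'t::finite^'n::finite" and U :: "real^'t^'m::finite"
    and C :: "real^'n^'p::finite"
  assumes A: "A \<in> Sigma_data Xm Xp U B" and v: "v \<in> F_set Xm Xp U B C D"
  shows "d_unobs_set (Sigma_data Xm Xp U B) C * sigma_min_real Xm
    \<le> data_frob (0::complex^'t^'n) (Delta_Xp Xm Xp U B C D lam v) (0::complex^'t^'m) (0::complex^'t^'p)"
proof -
  let ?d = "d_unobs_set (Sigma_data Xm Xp U B) C" and ?\<sigma> = "sigma_min_real Xm"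
    and ?s = "sigma_min_tall (unobs_matrix lam A C)"
    and ?x = "Xm *v v" and ?p = "orth_proj (S_plus Xm Xp U B C D) v"
  let ?w = "lam *s cvec ?x - cvec (A *v ?x)"
  have Cx: "C *v ?x = 0" and "v \<in> (Jstar Xm Xp U B C D)\<^sup>\<bottom>"
    using v by (simp_all add: F_set_def orth_compl_eq_orthogonal_comp matrix_vector_mul_assoc)
  then have "v \<in> {k. Xm *v k = 0}\<^sup>\<bottom>"
    using orthogonal_comp_anti_mono[OF kernel_subset_Jstar[OF A]] by blast
  then have \<sigma>: "?\<sigma> * norm v \<le> norm ?x" by (rule sigma_min_real_mult_le)
  have "?d \<le> ?s"
    using d_unobs_set_le[OF A] d_unobs_le_sigma_min_tall by (rule order_trans)
  then have "?d * ?\<sigma> * norm ?p \<le> ?s * (?\<sigma> * norm v)"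
    unfolding mult.assoc
    by (rule mult_mono) (simp_all add: mult_left_mono norm_orth_proj_le[OF subspace_S_plus]
        sigma_min_real_nonneg sigma_min_tall_nonneg_mult_le(1))
  also have "\<dots> \<le> ?s * norm ?x"
    using \<sigma> sigma_min_tall_nonneg_mult_le(1) by (rule mult_left_mono)
  also have "\<dots> \<le> norm ?w"
    using sigma_min_tall_nonneg_mult_le(2)[of "unobs_matrix lam A C" "cvec ?x"]
    by (simp add: norm_unobs_matrix_mult[OF Cx])
  finally have "?d * ?\<sigma> \<le> norm ?w / norm ?p"
    using orth_proj_S_plus_nonzero[OF v] by (simp add: pos_le_divide_eq)
  then show ?thesis by (simp add: data_frob_Delta_Xp[OF A])
qed

theorem theorem2:
  fixes Xm Xp :: "real^'t::finite^'n::finite"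
    and U :: "real^'t^'m::finite"
    and B :: "real^'m^'n"
    and C :: "real^'n^'p::finite"
    and D :: "real^'m^'p"
  assumes "Sigma_data Xm Xp U B \<noteq> {}"
  shows "(INF z\<in>(UNIV::complex set) \<times> F_set Xm Xp U B C D.
            ereal (data_frob (0::complex^'t^'n) (Delta_Xp Xm Xp U B C D (fst z) (snd z))
                     (0::complex^'t^'m) (0::complex^'t^'p)))
         \<ge> ereal (d_unobs_set (Sigma_data Xm Xp U B) C * sigma_min_real Xm)"
proof -
  obtain A where "A \<in> Sigma_data Xm Xp U B" using assms by blast
  then show ?thesis
    by (intro INF_greatest) (auto simp: Delta_Xp_lower_bound)
qed

end
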